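(* Consider the following fully discrete moment scheme for the one-dimensional Boltzmann–BGK equation. Fix $M\ge 3$ and $N>M$, an interval $[\xi_{\min},\xi_{\max}]$, the $N$-point Gauss–Legendre nodes $\xi_1,\dots,\xi_N$ and weights $\omega_1,\dots,\omega_N>0$ on it, $A\in\mathbb R^{M\times N}$ with $A_{mi}=\xi_i^{m-1}$, $A_{\mathrm{cons}}\in\mathbb R^{3\times N}$ the first three rows of $A$, $L=\operatorname{diag}(\omega_i)$, $\Xi=\operatorname{diag}(\xi_i)$, $|\Xi|=\operatorname{diag}(|\xi_i|)$, and $R=\{ALz: z\in\mathbb R^N,\ z>0\}$. The spatial domain $[x_{\min},x_{\max}]$ is divided into $N_x$ uniform cells $\mathcal I_i$ of width $\Delta x$, time steps have size $\Delta t$, and $\Lambda:=\Delta t/\Delta x$. Given positive initial data $f_0(x,\xi)$ and positive inflow boundary data $f_{in}(x,t,\xi)$, the moment vectors $u_i^k\in\mathbb R^M$ are initialized by $u_i^1=\frac1{\Delta x}\int_{\mathcal I_i}\sum_{j}\omega_j(1,\xi_j,\dots,\xi_j^{M-1})^T f_0(x,\xi_j)\,dx$ and for $k=1,2,\dots$ updated by: (1) (entropy minimization) $W_{\mathcal M,i}^k\in\mathbb R^N_{>0}$ minimizes $\sum_j w_j\log(w_j)\omega_j$ over $w\in\mathbb R^N_{>0}$ subject to $A_{\mathrm{cons}}Lw$ being equal to the first three entries of $u_i^k$; (2) (collision) $u_i^{k^*}=\frac{1}{1+\Delta t/\tau_i}u_i^k+\frac{\Delta t/\tau_i}{1+\Delta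 t/\tau_i}ALW_{\mathcal M,i}^k$ with relaxation times $\tau_i>0$; (3) (optimization) $W_i^{k^*}$ solves $\min_{W\in\mathbb R^N}\frac12\|W\|_{l^2}^2$ subject to $ALW=u_i^{k^*}$, $W>0$; (4) (transport) $u_i^{k+1}=u_i^{k^*}-\Lambda\big(\mathcal F(W_{i+1}^{k^*},W_i^{k^*})-\mathcal F(W_i^{k^*},W_{i-1}^{k^*})\big)$, where $\mathcal F(W_1,W_2)=\frac12\big(AL(\Xi-|\Xi|)W_1+AL(\Xi+|\Xi|)W_2\big)$ and the ghost values $W_0^{k^*}$, $W_{N_x+1}^{k^*}$ are the vectors of values $(f_{in}(x,t_k,\xi_j))_j$ at $x=x_{\min}$ and $x=x_{\max}$ respectively. Assume that for all $x$ and $t$ the vectors $\sum_j\omega_j(1,\xi_j,\dots,\xi_j^{M-1})^T f_{in}(x,t,\xi_j)$ and $\sum_j\omega_j(1,\xi_j,\dots,\xi_j^{M-1})^T f_0(x,\xi_j)$ belong to $R$. Then the quadratic optimization problem in step (3) is feasible (at every time step and in every cell) if $\Lambda\in\big(0,\min\{|\xi_{\max}^{-1}|,|\xi_{\min}^{-1}|\}\big]$.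
   Context: Vector inequalities $z>0$, $W>0$ are componentwise; $\mathbb R^N_{>0}$ denotes vectors with all entries positive. The scheme is a finite-volume/method-of-moments discretization in which moments are computed by the Gauss–Legendre quadrature on the truncated velocity interval $[\xi_{\min},\xi_{\max}]$, and the optimization problem in step (3) is called feasible if its constraint set is nonempty. *)

theory Defs
  imports "HOL-Analysis.Analysis"
begin

text \<open>Vectors in R^N / R^M are represented as functions nat => real, only the
entries with index below N (resp. M) being relevant. Node j (0-based, j < N)
is xi j, weight omega j. Row m (0-based, m < M) of A is (xi j)^m.\<close>

definition gauss_legendre ::
  "real \<Rightarrow> real \<Rightarrow> nat \<Rightarrow> (nat \<Rightarrow> real) \<Rightarrow> (nat \<Rightarrow> real) \<Rightarrow> bool" where
  "gauss_legendre a b N xi omega \<longleftrightarrow>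
     a < b \<and> 0 < N \<and>
     (\<forall>j. Suc j < N \<longrightarrow> xi j < xi (Suc j)) \<and>
     (\<forall>j<N. a \<le> xi j \<and> xi j \<le> b) \<and>
     (\<forall>p < 2 * N. (\<Sum>j<N. omega j * xi j ^ p) = integral {a..b} (\<lambda>x. x ^ p))"

text \<open>m-th entry (m 0-based) of the vector A L w.\<close>
definition mom :: "nat \<Rightarrow> (nat \<Rightarrow> real) \<Rightarrow> (nat \<Rightarrow> real) \<Rightarrow> nat \<Rightarrow> (nat \<Rightarrow> real) \<Rightarrow> real" where
  "mom N xi omega m w = (\<Sum>j<N. omega j * xi j ^ m * w j)"

definition in_R :: "nat \<Rightarrow> nat \<Rightarrow> (nat \<Rightarrow> real) \<Rightarrow> (nat \<Rightarrow> real) \<Rightarrow> (nat \<Rightarrow> real) \<Rightarrow> bool" where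
  "in_R M N xi omega u \<longleftrightarrow>
     (\<exists>z. (\<forall>j<N. 0 < z j) \<and> (\<forall>m<M. u m = mom N xi omega m z))"

definition flux :: "nat \<Rightarrow> (nat \<Rightarrow> real) \<Rightarrow> (nat \<Rightarrow> real) \<Rightarrow> (nat \<Rightarrow> real) \<Rightarrow> (nat \<Rightarrow> real) \<Rightarrow> nat \<Rightarrow> real" where
  "flux N xi omega W1 W2 m =
     (1/2) * ((\<Sum>j<N. omega j * xi j ^ m * (xi j - \<bar>xi j\<bar>) * W1 j)
            + (\<Sum>j<N. omega j * xi j ^ m * (xi j + \<bar>xi j\<bar>) * W2 j))"

definition qp_feasible_set :: "nat \<Rightarrow> nat \<Rightarrow> (nat \<Rightarrow> real) \<Rightarrow> (nat \<Rightarrow> real) \<Rightarrow> (nat \<Rightarrow> real) \<Rightarrow> (nat \<Rightarrow> real) set" where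
  "qp_feasible_set M N xi omega u =
     {W. (\<forall>j<N. 0 < W j) \<and> (\<forall>m<M. mom N xi omega m W = u m)}"

end

theory Submission
  imports Defs
begin

text \<open>The constraint set of step (3) is nonempty exactly when the moment vector lies in the
realizability cone R, so it suffices to show that the scheme only produces realizable moment
vectors. Initially they are moments of cell averages of f0 at the nodes, which are positive.
The collision step forms a positive combination of two realizable vectors. Under the CFL condition
the transported moment vector is the moment vector of node values that are convex combinations of
the node values of the cell and its two neighbours; these are positive, being solutions of the
previous step (3) or inflow data.\<close>

lemma in_R_cong:
  assumes "\<And>m. m < M \<Longrightarrow> u m = v m"
  shows "in_R M N xi omega u \<longleftrightarrow> in_R M N xi omega v"
  using assms unfolding in_R_def by auto

lemma qp_feasible_set_nonempty_iff_in_R: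
  "qp_feasible_set M N xi omega u \<noteq> {} \<longleftrightarrow> in_R M N xi omega u"
  unfolding qp_feasible_set_def in_R_def by auto

lemma mom_linear:
  "mom N xi omega m (\<lambda>j. a * v j + b * w j) = a * mom N xi omega m v + b * mom N xi omega m w"
  unfolding mom_def by (simp add: sum.distrib sum_distrib_left algebra_simps)

lemma in_R_positive_combination:
  assumes "in_R M N xi omega u" "in_R M N xi omega v" "0 < a" "0 < b"
  shows "in_R M N xi omega (\<lambda>m. a * u m + b * v m)"
proof -
  obtain y z where "\<forall>j<N. 0 < y j" "\<forall>m<M. u m = mom N xi omega m y"
    and "\<forall>j<N. 0 < z j" "\<forall>m<M. v m = mom N xi omega m z"
    using assms(1,2) unfolding in_R_def by blast
  with assms(3,4) show ?thesis
    unfolding in_R_def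
    by (intro exI[of _ "\<lambda>j. a * y j + b * z j"]) (auto simp: mom_linear intro!: add_pos_pos)
qed

lemma in_R_collision:
  assumes "in_R M N xi omega u" "\<forall>j<N. 0 < w j" "0 < r"
    and "\<And>m. m < M \<Longrightarrow> u' m = 1 / (1 + r) * u m + r / (1 + r) * mom N xi omega m w"
  shows "in_R M N xi omega u'"
proof -
  have "in_R M N xi omega (\<lambda>m. mom N xi omega m w)"
    using assms(2) unfolding in_R_def by blast
  with assms(1,3) have "in_R M N xi omega (\<lambda>m. 1 / (1 + r) * u m + r / (1 + r) * mom N xi omega m w)"
    by (intro in_R_positive_combination) auto
  then show ?thesis
    by (simp only: in_R_cong[OF assms(4)])
qed

lemma integral_pos_interval:
  fixes f :: "real \<Rightarrow> real"
  assumes f: "f integrable_on {a..b}" and ab: "a < b" and pos: "\<And>x. x \<in> {a..b} \<Longrightarrow> 0 < f x"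
  shows "0 < integral {a..b} f"
proof -
  have "f absolutely_integrable_on {a..b}"
    using f pos by (intro nonnegative_absolutely_integrable_1) (auto intro: less_imp_le)
  then have int: "integrable (lebesgue_on {a..b}) f"
    by (simp add: integrable_restrict_space set_integrable_def)
  have "integral {a..b} f \<noteq> 0"
  proof
    assume "integral {a..b} f = 0"
    moreover have "(LINT x:{a..b}|lebesgue_on {a..b}. f x) = (LINT x|lebesgue_on {a..b}. f x)"
      unfolding set_lebesgue_integral_def by (rule Bochner_Integration.integral_cong) auto
    moreover have "(LINT x|lebesgue_on {a..b}. f x) = integral {a..b} f"
      using int by (simp add: lebesgue_integral_eq_integral)
    ultimately have "{a..b} \<in> null_sets (lebesgue_on {a..b})"
      using pos by (intro null_if_pos_func_has_zero_int[OF int]) auto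
    then show False
      using ab by (auto simp: null_sets_restrict_space)
  qed
  moreover have "0 \<le> integral {a..b} f"
    using f pos by (intro integral_nonneg) (auto intro: less_imp_le)
  ultimately show ?thesis by simp
qed

lemma integral_mom:
  assumes "\<forall>j<N. (\<lambda>x. g x j) integrable_on S"
  shows "integral S (\<lambda>x. mom N xi omega m (g x)) = mom N xi omega m (\<lambda>j. integral S (\<lambda>x. g x j))"
  using assms unfolding mom_def by (subst integral_sum) (auto intro!: integrable_on_mult_right)

lemma in_R_cell_average:
  fixes g :: "real \<Rightarrow> nat \<Rightarrow> real"
  assumes "a < b" "0 < c"
    and int: "\<forall>j<N. (\<lambda>x. g x j) integrable_on {a..b}"
    and pos: "\<And>x j. x \<in> {a..b} \<Longrightarrow> j < N \<Longrightarrow> 0 < g x j"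
    and moments: "\<And>m. m < M \<Longrightarrow> u m = c * integral {a..b} (\<lambda>x. mom N xi omega m (g x))"
  shows "in_R M N xi omega u"
proof -
  have "0 < c * integral {a..b} (\<lambda>x. g x j)" if "j < N" for j
    using that assms integral_pos_interval[of "\<lambda>x. g x j" a b] by simp
  then have "in_R M N xi omega (\<lambda>m. c * integral {a..b} (\<lambda>x. mom N xi omega m (g x)))"
    unfolding in_R_def integral_mom[OF int]
    by (intro exI[of _ "\<lambda>j. c * integral {a..b} (\<lambda>x. g x j)"])
       (simp add: mom_def sum_distrib_left mult_ac)
  then show ?thesis
    by (simp only: in_R_cong[OF moments])
qed

lemma in_R_initial_cell_average:
  fixes f0 :: "real \<Rightarrow> real \<Rightarrow> real" and xmin xmax dx :: real and Nx i :: nat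
  defines "dx \<equiv> (xmax - xmin) / real Nx"
  assumes "xmin < xmax" "i \<in> {1..Nx}"
    and f0int: "\<forall>j<N. (\<lambda>x. f0 x (xi j)) integrable_on {xmin..xmax}"
    and f0pos: "\<forall>x v. 0 < f0 x v"
    and moments: "\<And>m. m < M \<Longrightarrow>
      u m = (1 / dx) * integral {xmin + (real i - 1) * dx .. xmin + real i * dx}
                         (\<lambda>x. \<Sum>j<N. omega j * xi j ^ m * f0 x (xi j))"
  shows "in_R M N xi omega u"
proof -
  have dx: "0 < dx"
    using assms(2,3) unfolding dx_def by simp
  have "real i * dx \<le> real Nx * dx"
    using assms(3) dx by (intro mult_right_mono) auto
  also have "\<dots> = xmax - xmin"
    using assms(3) unfolding dx_def by simp
  finally have cell: "xmin + (real i - 1) * dx < xmin + real i * dx"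
    "{xmin + (real i - 1) * dx .. xmin + real i * dx} \<subseteq> {xmin..xmax}"
    using assms(3) dx by (auto simp: algebra_simps)
  have "\<forall>j<N. (\<lambda>x. f0 x (xi j)) integrable_on {xmin + (real i - 1) * dx .. xmin + real i * dx}"
    using f0int cell(2) by (blast intro: integrable_on_subinterval)
  with cell(1) dx f0pos moments show ?thesis
    unfolding mom_def[symmetric]
    by (intro in_R_cell_average[where c = "1 / dx" and g = "\<lambda>x j. f0 x (xi j)"]) auto
qed

definition upwind_update ::
  "real \<Rightarrow> (nat \<Rightarrow> real) \<Rightarrow> (nat \<Rightarrow> real) \<Rightarrow> (nat \<Rightarrow> real) \<Rightarrow> (nat \<Rightarrow> real) \<Rightarrow> nat \<Rightarrow> real" where
  "upwind_update lam xi Wl Wc Wr j =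
     Wc j - lam * (max (xi j) 0 * (Wc j - Wl j) + min (xi j) 0 * (Wr j - Wc j))"

lemma flux_min_max:
  "flux N xi omega W1 W2 m
     = (\<Sum>j<N. omega j * xi j ^ m * (min (xi j) 0 * W1 j + max (xi j) 0 * W2 j))"
proof -
  have "(1/2) * (omega j * xi j ^ m * (xi j - \<bar>xi j\<bar>) * W1 j
                 + omega j * xi j ^ m * (xi j + \<bar>xi j\<bar>) * W2 j)
        = omega j * xi j ^ m * (min (xi j) 0 * W1 j + max (xi j) 0 * W2 j)" for j
    by (cases "0 \<le> xi j") (simp_all add: algebra_simps)
  then show ?thesis
    unfolding flux_def sum.distrib[symmetric] sum_distrib_left by simp
qed

lemma mom_upwind_update:
  "mom N xi omega m (upwind_update lam xi Wl Wc Wr)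
     = mom N xi omega m Wc - lam * (flux N xi omega Wr Wc m - flux N xi omega Wc Wl m)"
  unfolding mom_def flux_min_max upwind_update_def
  by (simp add: sum_subtractf[symmetric] sum_distrib_left algebra_simps)

lemma upwind_update_pos:
  assumes "0 < lam" "lam * \<bar>xi j\<bar> \<le> 1" "0 < Wl j" "0 < Wc j" "0 < Wr j"
  shows "0 < upwind_update lam xi Wl Wc Wr j"
proof -
  define p q where "p = lam * max (xi j) 0" and "q = - lam * min (xi j) 0"
  define mu where "mu = min (Wl j) (min (Wc j) (Wr j))"
  have "p + q = lam * \<bar>xi j\<bar>"
    unfolding p_def q_def by (auto simp: max_def min_def abs_if algebra_simps)
  then have weights: "0 \<le> p" "0 \<le> q" "1 - p - q \<ge> 0"
    using assms(1,2) unfolding p_def q_def by (auto simp: mult_le_0_iff)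
  have "0 < mu" "mu \<le> Wl j" "mu \<le> Wc j" "mu \<le> Wr j"
    using assms(3-5) unfolding mu_def by auto
  then have "(1 - p - q) * mu + p * mu + q * mu \<le> (1 - p - q) * Wc j + p * Wl j + q * Wr j"
    using weights by (intro add_mono mult_left_mono) auto
  then have "mu \<le> (1 - p - q) * Wc j + p * Wl j + q * Wr j"
    by (simp add: algebra_simps)
  also have "\<dots> = upwind_update lam xi Wl Wc Wr j"
    unfolding upwind_update_def p_def q_def by (simp add: algebra_simps)
  finally show ?thesis using \<open>0 < mu\<close> by linarith
qed

lemma in_R_upwind_transport:
  assumes "0 < lam" "\<forall>j<N. lam * \<bar>xi j\<bar> \<le> 1"
    and "\<forall>j<N. 0 < Wl j \<and> 0 < Wc j \<and> 0 < Wr j"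
    and moments: "\<And>m. m < M \<Longrightarrow>
           u m = mom N xi omega m Wc - lam * (flux N xi omega Wr Wc m - flux N xi omega Wc Wl m)"
  shows "in_R M N xi omega u"
proof -
  have "in_R M N xi omega (\<lambda>m. mom N xi omega m (upwind_update lam xi Wl Wc Wr))"
    using assms(1-3) upwind_update_pos unfolding in_R_def by blast
  then show ?thesis
    by (simp only: in_R_cong[OF moments] mom_upwind_update)
qed

lemma gauss_legendre_node_cfl:
  assumes "gauss_legendre a b N xi omega" "0 \<le> lam" "lam * \<bar>a\<bar> \<le> 1" "lam * \<bar>b\<bar> \<le> 1" "j < N"
  shows "lam * \<bar>xi j\<bar> \<le> 1"
proof -
  have "\<bar>xi j\<bar> \<le> max \<bar>a\<bar> \<bar>b\<bar>"
    using assms(1,5) unfolding gauss_legendre_def by auto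
  then have "lam * \<bar>xi j\<bar> \<le> lam * max \<bar>a\<bar> \<bar>b\<bar>"
    using assms(2) by (rule mult_left_mono)
  with assms(3,4) show ?thesis by (simp add: max_def split: if_split_asm)
qed

theorem lemma3p1:
  fixes M N Nx K i :: nat
    and xi omega :: "nat \<Rightarrow> real"
    and ximin ximax xmin xmax dt :: real
    and tau :: "nat \<Rightarrow> real"
    and f0 :: "real \<Rightarrow> real \<Rightarrow> real"
    and fin :: "real \<Rightarrow> real \<Rightarrow> real \<Rightarrow> real"
    and u ustar :: "nat \<Rightarrow> nat \<Rightarrow> nat \<Rightarrow> real"
    and WM Wstar :: "nat \<Rightarrow> nat \<Rightarrow> nat \<Rightarrow> real"
    and dx Lam :: real
    and tk :: "nat \<Rightarrow> real"
    and Wg :: "nat \<Rightarrow> nat \<Rightarrow> nat \<Rightarrow> real"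
  defines "dx \<equiv> (xmax - xmin) / real Nx"
    and "Lam \<equiv> dt / dx"
    and "tk \<equiv> (\<lambda>k. (real k - 1) * dt)"
    and "Wg \<equiv> (\<lambda>i k. if i = 0 then (\<lambda>j. fin xmin (tk k) (xi j))
                      else if i = Suc Nx then (\<lambda>j. fin xmax (tk k) (xi j))
                      else Wstar i k)"
  assumes M3: "3 \<le> M" and NM: "M < N"
    and GL: "gauss_legendre ximin ximax N xi omega"
    and wpos: "\<forall>j<N. 0 < omega j"
    and dom: "xmin < xmax" and Nx1: "1 \<le> Nx" and dtpos: "0 < dt"
    and taupos: "\<forall>i. 0 < tau i"
    and f0pos: "\<forall>x v. 0 < f0 x v"
    and finpos: "\<forall>x t v. 0 < fin x t v"
    and f0int: "\<forall>j<N. (\<lambda>x. f0 x (xi j)) integrable_on {xmin..xmax}"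
    and finR: "\<forall>x t. in_R M N xi omega (\<lambda>m. mom N xi omega m (\<lambda>j. fin x t (xi j)))"
    and f0R: "\<forall>x. in_R M N xi omega (\<lambda>m. mom N xi omega m (\<lambda>j. f0 x (xi j)))"
    and CFL: "0 < Lam \<and> Lam * \<bar>ximax\<bar> \<le> 1 \<and> Lam * \<bar>ximin\<bar> \<le> 1"
    and init: "\<forall>i\<in>{1..Nx}. \<forall>m<M. u i 1 m =
        (1 / dx) * integral {xmin + (real i - 1) * dx .. xmin + real i * dx}
                     (\<lambda>x. \<Sum>j<N. omega j * xi j ^ m * f0 x (xi j))"
    and step1: "\<forall>k\<in>{1..K}. \<forall>i\<in>{1..Nx}.
        (\<forall>j<N. 0 < WM i k j)
      \<and> (\<forall>m<3. mom N xi omega m (WM i k) = u i k m)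
      \<and> (\<forall>w. (\<forall>j<N. 0 < w j) \<and> (\<forall>m<3. mom N xi omega m w = u i k m) \<longrightarrow>
             (\<Sum>j<N. WM i k j * ln (WM i k j) * omega j) \<le> (\<Sum>j<N. w j * ln (w j) * omega j))"
    and step2: "\<forall>k\<in>{1..K}. \<forall>i\<in>{1..Nx}. \<forall>m<M.
        ustar i k m = 1 / (1 + dt / tau i) * u i k m
                    + (dt / tau i) / (1 + dt / tau i) * mom N xi omega m (WM i k)"
    and step3: "\<forall>k\<in>{1..<K}. \<forall>i\<in>{1..Nx}.
        Wstar i k \<in> qp_feasible_set M N xi omega (ustar i k)
      \<and> (\<forall>W\<in>qp_feasible_set M N xi omega (ustar i k).
            (1/2) * (\<Sum>j<N. (Wstar i k j)\<^sup>2) \<le> (1/2) * (\<Sum>j<N. (W j)\<^sup>2))"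
    and step4: "\<forall>k\<in>{1..<K}. \<forall>i\<in>{1..Nx}. \<forall>m<M.
        u i (Suc k) m = ustar i k m
          - Lam * (flux N xi omega (Wg (Suc i) k) (Wg i k) m
                   - flux N xi omega (Wg i k) (Wg (i - 1) k) m)"
    and K1: "1 \<le> K" and icell: "i \<in> {1..Nx}"
  shows "qp_feasible_set M N xi omega (ustar i K) \<noteq> {}"
proof -
  have cfl: "\<forall>j<N. Lam * \<bar>xi j\<bar> \<le> 1"
    using CFL by (auto intro: gauss_legendre_node_cfl[OF GL])
  have ghost_pos: "\<forall>j<N. 0 < Wg i' k j" if "i' \<le> Suc Nx" "k \<in> {1..<K}" for i' k
  proof (cases "i' \<in> {1..Nx}")
    case True
    then have "Wg i' k = Wstar i' k"
      unfolding Wg_def by auto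
    with step3[rule_format, OF that(2) True] show ?thesis
      unfolding qp_feasible_set_def by auto
  qed (use that finpos in \<open>auto simp: Wg_def\<close>)
  have u_realizable: "in_R M N xi omega (u i K)"
  proof (cases "K = 1")
    case True
    show ?thesis
      unfolding True using init[rule_format, OF icell, unfolded dx_def]
      by (rule in_R_initial_cell_average[OF dom icell f0int f0pos])
  next
    case False
    then obtain k where K: "K = Suc k" and k: "k \<in> {1..<K}"
      using K1 by (cases K) auto
    have "Wg i k = Wstar i k"
      using icell unfolding Wg_def by auto
    with step3[rule_format, OF k icell]
    have "mom N xi omega m (Wg i k) = ustar i k m" if "m < M" for m
      using that unfolding qp_feasible_set_def by simp
    then have moments: "u i K m = mom N xi omega m (Wg i k)
        - Lam * (flux N xi omega (Wg (Suc i) k) (Wg i k) m - flux N xi omega (Wg i k) (Wg (i - 1) k) m)"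
      if "m < M" for m
      using step4[rule_format, OF k icell that] that unfolding K by simp
    have "\<forall>j<N. 0 < Wg (i - 1) k j \<and> 0 < Wg i k j \<and> 0 < Wg (Suc i) k j"
      using ghost_pos[OF _ k, of "i - 1"] ghost_pos[OF _ k, of i] ghost_pos[OF _ k, of "Suc i"] icell
      by auto
    with CFL cfl moments show ?thesis
      by (intro in_R_upwind_transport) auto
  qed
  have "\<forall>j<N. 0 < WM i K j"
    using step1[rule_format, OF _ icell] K1 by auto
  moreover have "ustar i K m = 1 / (1 + dt / tau i) * u i K m
                   + (dt / tau i) / (1 + dt / tau i) * mom N xi omega m (WM i K)" if "m < M" for m
    using step2[rule_format, OF _ icell that] K1 by simp
  moreover have "0 < dt / tau i"
    using dtpos taupos by simp
  ultimately show ?thesis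
    unfolding qp_feasible_set_nonempty_iff_in_R using u_realizable in_R_collision by blast
qed

end
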